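(* Let $G$ be a finite simple undirected graph. Then there exists an integer $n\ge 2$ such that $G$ is isomorphic to an induced subgraph of $G(n)$.
   Context: For an integer $n\ge 2$, let $V(n)$ be the set of all divisors of $n$ that are greater than $1$. The graph $G(n)$ is the simple undirected graph with vertex set $V(n)$ in which two distinct vertices $a,b$ are adjacent if and only if $\gcd(a,b)>1$. *)

theory Defs
  imports Main
begin

definition divisor_vertices :: "nat \<Rightarrow> nat set" where
  "divisor_vertices n = {d. d dvd n \<and> d > 1}"

definition divisor_adj :: "nat \<Rightarrow> nat \<Rightarrow> nat \<Rightarrow> bool" where
  "divisor_adj n a b \<longleftrightarrow> a \<in> divisor_vertices n \<and> b \<in> divisor_vertices n \<and> a \<noteq> b \<and> gcd a b > 1"

definition simple_graph :: "'a set \<Rightarrow> ('a \<Rightarrow> 'a \<Rightarrow> bool) \<Rightarrow> bool" where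
  "simple_graph V E \<longleftrightarrow> finite V \<and> (\<forall>x y. E x y \<longrightarrow> x \<in> V \<and> y \<in> V)
     \<and> (\<forall>x y. E x y \<longrightarrow> E y x) \<and> (\<forall>x. \<not> E x x)"

definition induced_embedding ::
  "'a set \<Rightarrow> ('a \<Rightarrow> 'a \<Rightarrow> bool) \<Rightarrow> 'b set \<Rightarrow> ('b \<Rightarrow> 'b \<Rightarrow> bool) \<Rightarrow> ('a \<Rightarrow> 'b) \<Rightarrow> bool" where
  "induced_embedding V E W F f \<longleftrightarrow> inj_on f V \<and> f ` V \<subseteq> W
     \<and> (\<forall>x\<in>V. \<forall>y\<in>V. E x y \<longleftrightarrow> F (f x) (f y))"

end

theory Submission
  imports Defs "HOL-Computational_Algebra.Primes"
begin

text \<open>Every finite graph is an intersection graph: represent a vertex \<open>v\<close> by a private point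
  together with one point for each edge at \<open>v\<close>; then distinct vertices are adjacent iff their
  point sets meet. Label the finitely many points injectively by primes and send \<open>v\<close> to the
  product of the primes on its points. Two such products have a common prime factor iff the
  point sets meet, distinct point sets give distinct products, and all products divide their
  common multiple \<open>n\<close>.\<close>

lemma finite_prime_labelling:
  assumes "finite T"
  obtains p :: "'a \<Rightarrow> nat" where "inj_on p T" "\<And>x. x \<in> T \<Longrightarrow> prime (p x)"
proof -
  obtain B where B: "finite B" "card B = card T" "B \<subseteq> {p::nat. prime p}"
    using infinite_arbitrarily_large[OF primes_infinite] by blast
  obtain p where "p ` T \<subseteq> B" "inj_on p T"
    using card_le_inj[OF assms B(1)] B(2) by auto
  with B(3) that show ?thesis by blast
qed

context
  fixes T :: "'a set" and p :: "'a \<Rightarrow> nat"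
  assumes finite_T: "finite T"
    and inj_p: "inj_on p T"
    and prime_p: "\<And>x. x \<in> T \<Longrightarrow> prime (p x)"
begin

lemma prime_dvd_prod_labels_iff:
  assumes "A \<subseteq> T" "prime q"
  shows "q dvd prod p A \<longleftrightarrow> q \<in> p ` A"
proof -
  have "finite A" using assms(1) finite_T by (rule finite_subset)
  have "q dvd p x \<longleftrightarrow> q = p x" if "x \<in> A" for x
    using primes_dvd_imp_eq[OF assms(2) prime_p[of x]] that assms(1) by auto
  then show ?thesis using prime_dvd_prod_iff[OF \<open>finite A\<close> assms(2)] by auto
qed

lemma inj_on_prod_labels: "inj_on (prod p) (Pow T)"
proof (rule inj_onI)
  have sub: "p ` A \<subseteq> p ` B" if "A \<subseteq> T" "B \<subseteq> T" "prod p A = prod p B" for A B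
  proof
    fix q assume "q \<in> p ` A"
    moreover from this have "prime q" using that(1) prime_p by auto
    ultimately show "q \<in> p ` B" using that prime_dvd_prod_labels_iff by metis
  qed
  fix A B assume "A \<in> Pow T" "B \<in> Pow T" "prod p A = prod p B"
  then have "p ` A = p ` B" using sub by (metis PowD subset_antisym)
  then show "A = B" using inj_on_image_eq_iff[OF inj_p] \<open>A \<in> Pow T\<close> \<open>B \<in> Pow T\<close> by blast
qed

lemma gcd_prod_labels_gt_1_iff:
  assumes "A \<subseteq> T" "B \<subseteq> T"
  shows "gcd (prod p A) (prod p B) > 1 \<longleftrightarrow> A \<inter> B \<noteq> {}"
proof
  assume "gcd (prod p A) (prod p B) > 1"
  then obtain q where q: "prime q" "q dvd gcd (prod p A) (prod p B)"
    using prime_factor_nat[of "gcd (prod p A) (prod p B)"] by auto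
  then have "q dvd prod p A" "q dvd prod p B" by auto
  then have "q \<in> p ` A" "q \<in> p ` B" using assms q(1) prime_dvd_prod_labels_iff by auto
  then obtain a b where "a \<in> A" "b \<in> B" "p a = p b" by (metis imageE)
  moreover from this have "a = b" using assms inj_p by (blast dest: inj_onD)
  ultimately show "A \<inter> B \<noteq> {}" by blast
next
  assume "A \<inter> B \<noteq> {}"
  then obtain x where x: "x \<in> A" "x \<in> B" by blast
  then have "p x dvd prod p A" "p x dvd prod p B"
    using assms prime_p prime_dvd_prod_labels_iff by (blast intro: imageI)+
  then have "p x dvd gcd (prod p A) (prod p B)" by simp
  moreover have "prod p A > 0"
    using prod_pos[of A p] assms(1) prime_p prime_gt_0_nat by blast
  then have "gcd (prod p A) (prod p B) > 0" by simp
  ultimately have "p x \<le> gcd (prod p A) (prod p B)" by (rule dvd_imp_le)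
  moreover have "p x > 1" using x assms prime_p prime_gt_1_nat by blast
  ultimately show "gcd (prod p A) (prod p B) > 1" by linarith
qed

lemma prod_labels_gt_1:
  assumes "A \<subseteq> T" "A \<noteq> {}"
  shows "prod p A > 1"
  using gcd_prod_labels_gt_1_iff[OF assms(1) assms(1)] assms(2) by simp

end

definition incidence_sets :: "('a \<Rightarrow> 'a \<Rightarrow> bool) \<Rightarrow> 'a \<Rightarrow> ('a + 'a set) set" where
  "incidence_sets E v = insert (Inl v) ((\<lambda>w. Inr {v, w}) ` {w. E v w})"

lemma finite_incidence_sets:
  assumes "simple_graph V E"
  shows "finite (incidence_sets E v)"
proof -
  have "{w. E v w} \<subseteq> V" using assms unfolding simple_graph_def by blast
  then have "finite {w. E v w}" using assms unfolding simple_graph_def by (blast intro: finite_subset)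
  then show ?thesis unfolding incidence_sets_def by simp
qed

lemma inj_incidence_sets: "inj (incidence_sets E)"
  by (rule injI) (auto simp: incidence_sets_def set_eq_iff)

lemma incidence_sets_meet_iff:
  assumes E_sym: "\<And>x y. E x y \<Longrightarrow> E y x" and "u \<noteq> v"
  shows "incidence_sets E u \<inter> incidence_sets E v \<noteq> {} \<longleftrightarrow> E u v"
proof
  assume "incidence_sets E u \<inter> incidence_sets E v \<noteq> {}"
  then obtain w w' where "E u w" "E v w'" "{u, w} = {v, w'}"
    using \<open>u \<noteq> v\<close> unfolding incidence_sets_def by auto
  then show "E u v" using \<open>u \<noteq> v\<close> E_sym by (metis doubleton_eq_iff)
next
  assume "E u v"
  then have "Inr {u, v} \<in> incidence_sets E u" "Inr {v, u} \<in> incidence_sets E v"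
    using E_sym unfolding incidence_sets_def by blast+
  then show "incidence_sets E u \<inter> incidence_sets E v \<noteq> {}"
    by (metis disjoint_iff insert_commute)
qed

lemma induced_embedding_divisor_graph:
  fixes f :: "'a \<Rightarrow> nat"
  assumes "finite V" "inj_on f V" "\<And>v. v \<in> V \<Longrightarrow> f v > 1" "\<And>v. \<not> E v v"
    and adj: "\<And>u v. u \<in> V \<Longrightarrow> v \<in> V \<Longrightarrow> u \<noteq> v \<Longrightarrow> E u v \<longleftrightarrow> gcd (f u) (f v) > 1"
  shows "induced_embedding V E (divisor_vertices (2 * prod f V)) (divisor_adj (2 * prod f V)) f"
proof -
  have vert: "f v \<in> divisor_vertices (2 * prod f V)" if "v \<in> V" for v
    using assms(1,3) that by (simp add: divisor_vertices_def dvd_prodI)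
  have "E u v \<longleftrightarrow> divisor_adj (2 * prod f V) (f u) (f v)" if "u \<in> V" "v \<in> V" for u v
    using that vert adj assms(2,4) by (cases "u = v") (auto simp: divisor_adj_def inj_on_eq_iff)
  with vert assms(2) show ?thesis unfolding induced_embedding_def by blast
qed

theorem theorem1:
  fixes V :: "'a set" and E :: "'a \<Rightarrow> 'a \<Rightarrow> bool"
  assumes "simple_graph V E"
  shows "\<exists>n::nat. n \<ge> 2 \<and> (\<exists>f. induced_embedding V E (divisor_vertices n) (divisor_adj n) f)"
proof -
  have "finite V" and E_sym: "\<And>x y. E x y \<Longrightarrow> E y x" and irrefl: "\<And>x. \<not> E x x"
    using assms unfolding simple_graph_def by auto
  define T where "T = (\<Union>v\<in>V. incidence_sets E v)"
  have "finite T" unfolding T_def using \<open>finite V\<close> finite_incidence_sets[OF assms] by blast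
  then obtain p :: "_ \<Rightarrow> nat" where p: "inj_on p T" "\<And>x. x \<in> T \<Longrightarrow> prime (p x)"
    using finite_prime_labelling by blast
  define f where "f = prod p \<circ> incidence_sets E"
  have sub: "incidence_sets E v \<subseteq> T" if "v \<in> V" for v
    using that unfolding T_def by blast
  have "inj_on f V"
    unfolding f_def using inj_incidence_sets sub
    by (intro comp_inj_on inj_on_subset[OF inj_on_prod_labels[OF \<open>finite T\<close> p]])
       (auto intro: inj_on_subset)
  moreover have f_gt_1: "f v > 1" if "v \<in> V" for v
    using prod_labels_gt_1[OF \<open>finite T\<close> p sub[OF that]] by (simp add: f_def incidence_sets_def)
  moreover have "E u v \<longleftrightarrow> gcd (f u) (f v) > 1" if "u \<in> V" "v \<in> V" "u \<noteq> v" for u v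
    using gcd_prod_labels_gt_1_iff[OF \<open>finite T\<close> p sub[OF that(1)] sub[OF that(2)]]
      incidence_sets_meet_iff[of E, OF E_sym that(3)]
    by (simp add: f_def)
  ultimately have "induced_embedding V E (divisor_vertices (2 * prod f V)) (divisor_adj (2 * prod f V)) f"
    by (rule induced_embedding_divisor_graph[OF \<open>finite V\<close> _ _ irrefl])
  moreover have "2 * prod f V \<ge> 2"
    using prod_pos[of V f] f_gt_1 by fastforce
  ultimately show ?thesis by (intro exI[of _ "2 * prod f V"] conjI exI[of _ f])
qed

end
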